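(* If $P$ is a generic flat set of $n$ points in convex position in the plane, then $\operatorname{cr}(P)\ge n-3$.
   Context: A point set in convex position is flat if the maximum difference in $y$-coordinates between any two of its points is smaller than the minimum difference in $x$-coordinates between any two of its points. A finite planar point set is generic if no three of its points are collinear and every subset has a unique Euclidean minimum spanning tree (MST); for generic $X$, $T_X$ is its MST drawn with straight-line edges. For disjoint $R,B$ with $R\cup B$ generic, $\operatorname{cr}(R,B)$ is the number of crossings between edges of $T_R$ and edges of $T_B$, and $\operatorname{cr}(P)=\max\operatorname{cr}(R,B)$ over all partitions $P=R\cup B$ into two disjoint sets. *)

theory Defs
  imports "HOL-Analysis.Analysis"
begin

type_synonym point = "real \<times> real"

definition convex_position :: "point set \<Rightarrow> bool" where
  "convex_position P \<longleftrightarrow> (\<forall>p\<in>P. p \<notin> convex hull (P - {p}))"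

definition flat :: "point set \<Rightarrow> bool" where
  "flat P \<longleftrightarrow> (\<forall>p\<in>P. \<forall>q\<in>P. \<forall>r\<in>P. \<forall>s\<in>P.
      r \<noteq> s \<longrightarrow> \<bar>snd p - snd q\<bar> < \<bar>fst r - fst s\<bar>)"

definition all_edges :: "point set \<Rightarrow> point set set" where
  "all_edges X = {{a, b} | a b. a \<in> X \<and> b \<in> X \<and> a \<noteq> b}"

definition edge_len :: "point set \<Rightarrow> real" where
  "edge_len e = (THE d. \<exists>a b. e = {a, b} \<and> d = dist a b)"

definition adj :: "point set set \<Rightarrow> (point \<times> point) set" where
  "adj E = {(a, b). {a, b} \<in> E}"

definition spanning_tree :: "point set \<Rightarrow> point set set \<Rightarrow> bool" where
  "spanning_tree X E \<longleftrightarrow> E \<subseteq> all_edges X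
     \<and> (\<forall>a\<in>X. \<forall>b\<in>X. (a, b) \<in> (adj E)\<^sup>*)
     \<and> card E = card X - 1"

definition weight :: "point set set \<Rightarrow> real" where
  "weight E = (\<Sum>e\<in>E. edge_len e)"

definition is_MST :: "point set \<Rightarrow> point set set \<Rightarrow> bool" where
  "is_MST X E \<longleftrightarrow> spanning_tree X E \<and> (\<forall>E'. spanning_tree X E' \<longrightarrow> weight E \<le> weight E')"

definition MST :: "point set \<Rightarrow> point set set" where
  "MST X = (THE E. is_MST X E)"

definition generic :: "point set \<Rightarrow> bool" where
  "generic P \<longleftrightarrow> finite P
     \<and> (\<forall>a\<in>P. \<forall>b\<in>P. \<forall>c\<in>P. a \<noteq> b \<and> a \<noteq> c \<and> b \<noteq> c \<longrightarrow> \<not> collinear {a, b, c})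
     \<and> (\<forall>X\<subseteq>P. \<exists>!E. is_MST X E)"

text \<open>Two straight-line edges cross if their segments meet (for disjoint generic
  sets this is always a proper crossing).\<close>
definition crosses :: "point set \<Rightarrow> point set \<Rightarrow> bool" where
  "crosses e f \<longleftrightarrow> convex hull e \<inter> convex hull f \<noteq> {}"

definition cr2 :: "point set \<Rightarrow> point set \<Rightarrow> nat" where
  "cr2 R B = card {(e, f). e \<in> MST R \<and> f \<in> MST B \<and> crosses e f}"

definition cr :: "point set \<Rightarrow> nat" where
  "cr P = Max {cr2 R (P - R) | R. R \<subseteq> P}"

end

theory Submission
  imports Defs "HOL-Library.Transitive_Closure_Table"
begin

text \<open>
  Sort P by x-coordinate as p 0, ..., p (n - 1). By flatness an edge is longer than every
  edge whose x-interval is strictly contained in its own, so an exchange argument shows that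
  the MST of any subset of P is the path through its points in x-order. Colour p 0 blue and p 1 red;
  afterwards p (i + 1) keeps the colour of p i exactly when the two lie on opposite sides of
  the line through p 0 and p (n - 1), except that p (n - 1) always switches colour. Convex
  position puts each p b on the same side of every chord p a p c (a < b < c) as of that line.
  Now fix 1 \<le> i \<le> n - 3, let j < i be the last index whose colour differs from that of i,
  and k > i + 1 the first index whose colour differs from that of i + 1. If i and i + 1 have
  the same colour, the MST edge p i p (i + 1) crosses the MST edge p j p k of the other
  colour; otherwise p i p k crosses p j p (i + 1). In both cases the larger of the two left
  endpoints is p i, so these n - 3 crossings are distinct.
\<close>

definition line_y :: "point \<Rightarrow> point \<Rightarrow> real \<Rightarrow> real" where
  "line_y u v x = snd u + (x - fst u) / (fst v - fst u) * (snd v - snd u)"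

lemma line_y_left [simp]: "line_y u v (fst u) = snd u"
  by (simp add: line_y_def)

lemma line_y_right: "fst u \<noteq> fst v \<Longrightarrow> line_y u v (fst v) = snd v"
  by (simp add: line_y_def)

lemma point_on_line_in_closed_segment:
  assumes "fst u < fst v" "fst u \<le> x" "x \<le> fst v"
  shows "(x, line_y u v x) \<in> closed_segment u v"
proof -
  define t where "t = (x - fst u) / (fst v - fst u)"
  have "0 \<le> t" "t \<le> 1" using assms by (auto simp: t_def divide_simps)
  moreover have "t * (fst v - fst u) = x - fst u" using assms by (simp add: t_def)
  then have "x = (1 - t) * fst u + t * fst v" by (simp add: algebra_simps)
  moreover have "line_y u v x = snd u + t * (snd v - snd u)" by (simp add: line_y_def t_def)
  then have "line_y u v x = (1 - t) * snd u + t * snd v" by (simp add: algebra_simps)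
  ultimately show ?thesis
    unfolding closed_segment_def by (intro CollectI exI[of _ t]) (simp add: prod_eq_iff)
qed

lemma vertically_between_in_closed_segment:
  fixes b q q' :: point
  assumes "fst q = fst b" "fst q' = fst b" "snd q \<le> snd b" "snd b \<le> snd q'"
  shows "b \<in> closed_segment q q'"
proof (cases "snd q = snd q'")
  case True
  then have "b = q" using assms by (simp add: prod_eq_iff)
  then show ?thesis by simp
next
  case False
  define t where "t = (snd b - snd q) / (snd q' - snd q)"
  have "0 \<le> t" "t \<le> 1" using assms False by (auto simp: t_def divide_simps)
  moreover have "t * (snd q' - snd q) = snd b - snd q" using False by (simp add: t_def)
  then have "b = (1 - t) *\<^sub>R q + t *\<^sub>R q'"
    using assms by (simp add: prod_eq_iff algebra_simps)
  ultimately show ?thesis unfolding closed_segment_def by blast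
qed

lemma crosses_iff_closed_segments_meet:
  "crosses {a, b} {c, d} \<longleftrightarrow> closed_segment a b \<inter> closed_segment c d \<noteq> {}"
  by (simp add: crosses_def segment_convex_hull)

lemma crosses_commute: "crosses e f \<longleftrightarrow> crosses f e"
  unfolding crosses_def by blast

lemma crosses_if_heights_swap:
  assumes "fst u < fst v" "fst u' < fst v'" "fst u \<le> L" "fst u' \<le> L" "L \<le> R"
    "R \<le> fst v" "R \<le> fst v'"
    and swap: "(line_y u v L - line_y u' v' L) * (line_y u v R - line_y u' v' R) \<le> 0"
  shows "crosses {u, v} {u', v'}"
proof -
  define g where "g x = line_y u v x - line_y u' v' x" for x
  have "continuous_on {L..R} g"
    using assms unfolding g_def line_y_def by (intro continuous_intros) auto
  moreover have "g L \<le> 0 \<and> 0 \<le> g R \<or> g R \<le> 0 \<and> 0 \<le> g L"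
    using swap by (auto simp: g_def mult_le_0_iff)
  ultimately obtain x where x: "L \<le> x" "x \<le> R" "g x = 0"
    using IVT'[of g L 0 R] IVT2'[of g R 0 L] \<open>L \<le> R\<close> by blast
  then have "(x, line_y u v x) \<in> closed_segment u v \<inter> closed_segment u' v'"
    using assms point_on_line_in_closed_segment[of u v x] point_on_line_in_closed_segment[of u' v' x]
    by (auto simp: g_def)
  then show ?thesis unfolding crosses_iff_closed_segments_meet by blast
qed

lemma off_line_if_not_collinear:
  assumes "\<not> collinear {a, b, c}" "fst a < fst b" "fst b < fst c"
  shows "snd b \<noteq> line_y a c (fst b)"
proof
  assume "snd b = line_y a c (fst b)"
  moreover have "(fst b, line_y a c (fst b)) \<in> closed_segment a c"
    using assms by (intro point_on_line_in_closed_segment) auto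
  ultimately have "b \<in> closed_segment a c" by (metis prod.collapse)
  then have "{a, b, c} \<subseteq> closed_segment a c" by auto
  then show False
    using assms(1) collinear_closed_segment collinear_subset by blast
qed

text \<open>Otherwise b would lie on the vertical segment between the two lines, which is
  contained in the convex hull of the other points.\<close>
lemma convex_position_same_side:
  assumes cp: "convex_position P" and mem: "a \<in> P" "b \<in> P" "c \<in> P" "l \<in> P" "r \<in> P"
    and order: "fst l \<le> fst a" "fst a < fst b" "fst b < fst c" "fst c \<le> fst r"
    and off: "snd b \<noteq> line_y a c (fst b)" "snd b \<noteq> line_y l r (fst b)"
  shows "snd b > line_y a c (fst b) \<longleftrightarrow> snd b > line_y l r (fst b)"
proof (rule ccontr)
  define H where "H = convex hull (P - {b})"
  define q where "q = (fst b, line_y a c (fst b))"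
  define q' where "q' = (fst b, line_y l r (fst b))"
  have "a \<in> H" "c \<in> H" "l \<in> H" "r \<in> H"
    using mem order by (auto simp: H_def intro!: hull_inc)
  then have "closed_segment a c \<subseteq> H" "closed_segment l r \<subseteq> H"
    by (simp_all add: H_def closed_segment_subset)
  then have "q \<in> H" "q' \<in> H"
    using order point_on_line_in_closed_segment[of a c "fst b"]
      point_on_line_in_closed_segment[of l r "fst b"] by (auto simp: q_def q'_def)
  then have "closed_segment q q' \<subseteq> H" by (simp add: H_def closed_segment_subset)
  assume "\<not> ?thesis"
  then have "snd q \<le> snd b \<and> snd b \<le> snd q' \<or> snd q' \<le> snd b \<and> snd b \<le> snd q"
    using off by (auto simp: q_def q'_def)
  then have "b \<in> closed_segment q q' \<or> b \<in> closed_segment q' q"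
    by (auto simp: q_def q'_def intro: vertically_between_in_closed_segment)
  then have "b \<in> closed_segment q q'" by (metis closed_segment_commute)
  then have "b \<in> H" using \<open>closed_segment q q' \<subseteq> H\<close> by blast
  then show False using cp mem unfolding convex_position_def H_def by blast
qed

lemma edge_len_doubleton [simp]: "edge_len {a, b} = dist a b"
  unfolding edge_len_def
proof (rule the_equality)
  fix d assume "\<exists>a' b'. {a, b} = {a', b'} \<and> d = dist a' b'"
  then show "d = dist a b" by (auto simp: doubleton_eq_iff dist_commute)
qed blast

lemma weight_exchange:
  assumes "finite E" "{u, v} \<in> E" "{a, b} \<notin> E"
  shows "weight (insert {a, b} (E - {{u, v}})) = weight E - dist u v + dist a b"
  using assms by (simp add: weight_def sum_diff1)

lemma finite_all_edges: "finite X \<Longrightarrow> finite (all_edges X)"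
proof -
  assume "finite X"
  have "all_edges X \<subseteq> (\<lambda>(a, b). {a, b}) ` (X \<times> X)" unfolding all_edges_def by auto
  then show ?thesis using \<open>finite X\<close> by (meson finite_SigmaI finite_imageI finite_subset)
qed

lemma subset_if_mem_all_edges: "e \<in> all_edges X \<Longrightarrow> e \<subseteq> X"
  unfolding all_edges_def by auto

lemma adj_rtrancl_sym: "(x, y) \<in> (adj E)\<^sup>* \<Longrightarrow> (y, x) \<in> (adj E)\<^sup>*"
proof -
  have "(adj E)\<inverse> = adj E" unfolding adj_def by (auto simp: insert_commute)
  then show "(x, y) \<in> (adj E)\<^sup>* \<Longrightarrow> (y, x) \<in> (adj E)\<^sup>*" by (metis rtrancl_converseI)
qed

lemma adj_rtrancl_mono: "E \<subseteq> F \<Longrightarrow> (adj E)\<^sup>* \<subseteq> (adj F)\<^sup>*"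
  unfolding adj_def by (rule rtrancl_mono) auto

lemma rtrancl_path_avoids_edge:
  assumes "rtrancl_path (\<lambda>x y. {x, y} \<in> E) y ys z" "w \<notin> set (y # ys)" "w \<in> e"
  shows "(y, z) \<in> (adj (E - {e}))\<^sup>*"
  using assms
proof (induction rule: rtrancl_path.induct)
  case (step x y ys z)
  then have "(x, y) \<in> adj (E - {e})" unfolding adj_def by auto
  with step show ?case by auto
qed simp

lemma rtrancl_path_cut_edge:
  assumes "rtrancl_path (\<lambda>x y. {x, y} \<in> E) x ys z" "distinct (x # ys)" "x \<in> S" "z \<notin> S"
  shows "\<exists>u v. {u, v} \<in> E \<and> u \<in> S \<and> v \<notin> S \<and> u \<in> set (x # ys) \<and> v \<in> set (x # ys)
     \<and> (x, u) \<in> (adj (E - {{u, v}}))\<^sup>* \<and> (v, z) \<in> (adj (E - {{u, v}}))\<^sup>*"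
  using assms
proof (induction rule: rtrancl_path.induct)
  case (step x y ys z)
  show ?case
  proof (cases "y \<in> S")
    case True
    then obtain u v where uv: "{u, v} \<in> E" "u \<in> S" "v \<notin> S" "u \<in> set (y # ys)"
      "v \<in> set (y # ys)" "(y, u) \<in> (adj (E - {{u, v}}))\<^sup>*" "(v, z) \<in> (adj (E - {{u, v}}))\<^sup>*"
      using step by auto
    have "{x, y} \<noteq> {u, v}" using step uv by (auto simp: doubleton_eq_iff)
    then have "(x, y) \<in> adj (E - {{u, v}})" using step unfolding adj_def by auto
    with uv show ?thesis by (intro exI[of _ u] exI[of _ v]) auto
  next
    case False
    have "(y, z) \<in> (adj (E - {{x, y}}))\<^sup>*"
      by (rule rtrancl_path_avoids_edge[where w = x]) (use step in auto)
    with step False show ?thesis by (intro exI[of _ x] exI[of _ y]) auto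
  qed
qed simp

lemma spanning_tree_exchange:
  assumes st: "spanning_tree X E" and fin: "finite X"
    and uv: "{u, v} \<in> E" and ab: "a \<in> X" "b \<in> X" "a \<noteq> b" "{a, b} \<notin> E"
    and au: "(a, u) \<in> (adj (E - {{u, v}}))\<^sup>*" and vb: "(v, b) \<in> (adj (E - {{u, v}}))\<^sup>*"
  shows "spanning_tree X (insert {a, b} (E - {{u, v}}))" (is "spanning_tree X ?E'")
proof -
  have sub: "E \<subseteq> all_edges X" using st unfolding spanning_tree_def by simp
  then have "finite E" using fin finite_all_edges finite_subset by blast
  moreover have "card E > 0" using \<open>finite E\<close> uv card_gt_0_iff by blast
  ultimately have "card ?E' = card E" using uv ab by (simp add: card_Suc_Diff1)
  moreover have "{a, b} \<in> all_edges X" using ab unfolding all_edges_def by blast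
  then have "?E' \<subseteq> all_edges X" using sub by blast
  moreover have "(adj E)\<^sup>* \<subseteq> (adj ?E')\<^sup>*"
  proof (rule rtrancl_subset_rtrancl, rule subrelI)
    have rest: "(adj (E - {{u, v}}))\<^sup>* \<subseteq> (adj ?E')\<^sup>*" by (rule adj_rtrancl_mono) blast
    have "(u, a) \<in> (adj ?E')\<^sup>*" "(b, v) \<in> (adj ?E')\<^sup>*"
      using rest adj_rtrancl_sym[OF au] adj_rtrancl_sym[OF vb] by blast+
    moreover have "(a, b) \<in> adj ?E'" by (simp add: adj_def)
    ultimately have "(u, v) \<in> (adj ?E')\<^sup>*" by (meson r_into_rtrancl rtrancl_trans)
    then have uv': "(x, y) \<in> (adj ?E')\<^sup>*" if "{x, y} = {u, v}" for x y
      using that adj_rtrancl_sym by (metis doubleton_eq_iff)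
    fix x y assume xy: "(x, y) \<in> adj E"
    show "(x, y) \<in> (adj ?E')\<^sup>*"
    proof (cases "{x, y} = {u, v}")
      case False
      then have "(x, y) \<in> adj ?E'" using xy unfolding adj_def by blast
      then show ?thesis by blast
    qed (rule uv')
  qed
  then have "\<forall>x\<in>X. \<forall>y\<in>X. (x, y) \<in> (adj ?E')\<^sup>*"
    using st unfolding spanning_tree_def by blast
  ultimately show ?thesis using st unfolding spanning_tree_def by simp
qed

lemma flat_subset: "flat P \<Longrightarrow> X \<subseteq> P \<Longrightarrow> flat X"
  unfolding flat_def by blast

lemma flat_inj_on_fst: "flat P \<Longrightarrow> inj_on fst P"
  unfolding flat_def inj_on_def by (metis abs_zero diff_self less_irrefl)

lemma dist_le_abs_diff_fst_plus_snd:
  "dist (a :: point) b \<le> \<bar>fst a - fst b\<bar> + \<bar>snd a - snd b\<bar>"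
proof -
  have "dist a b = sqrt ((dist (fst a) (fst b))\<^sup>2 + (dist (snd a) (snd b))\<^sup>2)"
    by (metis dist_Pair_Pair prod.collapse)
  also have "\<dots> \<le> \<bar>dist (fst a) (fst b)\<bar> + \<bar>dist (snd a) (snd b)\<bar>"
    by (rule sqrt_sum_squares_le_sum_abs)
  finally show ?thesis by (simp add: dist_real_def)
qed

text \<open>The vertical offset of a and b is smaller than the horizontal extent by which
  [fst u, fst v] exceeds [fst a, fst b].\<close>
lemma flat_dist_less:
  assumes "flat X" "u \<in> X" "v \<in> X" "a \<in> X" "b \<in> X"
    and "fst u \<le> fst a" "fst a < fst b" "fst b \<le> fst v" "u \<noteq> a \<or> v \<noteq> b"
  shows "dist a b < dist u v"
proof -
  have "dist a b \<le> (fst b - fst a) + \<bar>snd a - snd b\<bar>"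
    using dist_le_abs_diff_fst_plus_snd[of a b] assms by simp
  moreover have "fst v - fst u \<le> dist u v"
    using dist_fst_le[of v u] by (simp add: dist_real_def dist_commute)
  moreover have "\<bar>snd a - snd b\<bar> < fst a - fst u \<or> \<bar>snd a - snd b\<bar> < fst v - fst b"
    using assms unfolding flat_def by (smt (verit))
  ultimately show ?thesis using assms by linarith
qed

text \<open>The tree path from a to b leaves {x. fst x \<le> fst a} through an edge spanning
  [fst a, fst b]; exchanging that edge for {a, b} would give a lighter spanning tree.\<close>
lemma is_MST_flat_consecutive:
  assumes mst: "is_MST X E" and fl: "flat X" and fin: "finite X"
    and ab: "a \<in> X" "b \<in> X" "fst a < fst b"
    and between: "\<forall>x\<in>X. \<not> (fst a < fst x \<and> fst x < fst b)"
  shows "{a, b} \<in> E"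
proof (rule ccontr)
  assume nab: "{a, b} \<notin> E"
  have st: "spanning_tree X E" using mst unfolding is_MST_def by simp
  have Esub: "E \<subseteq> all_edges X" using st unfolding spanning_tree_def by simp
  have "(a, b) \<in> (adj E)\<^sup>*" using st ab unfolding spanning_tree_def by simp
  then have "(\<lambda>x y. {x, y} \<in> E)\<^sup>*\<^sup>* a b" unfolding adj_def by (simp add: rtrancl_def)
  then obtain ys where "rtrancl_path (\<lambda>x y. {x, y} \<in> E) a ys b" "distinct (a # ys)"
    by (metis rtranclp_eq_rtrancl_path rtrancl_path_distinct)
  then obtain u v where uv: "{u, v} \<in> E" "fst u \<le> fst a" "fst a < fst v"
      "(a, u) \<in> (adj (E - {{u, v}}))\<^sup>*" "(v, b) \<in> (adj (E - {{u, v}}))\<^sup>*"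
    using rtrancl_path_cut_edge[where S = "{x. fst x \<le> fst a}"] ab
    by (metis (mono_tags, lifting) mem_Collect_eq not_le order_less_irrefl)
  have "{u, v} \<subseteq> X" using uv(1) Esub subset_if_mem_all_edges by blast
  then have "\<not> (fst a < fst v \<and> fst v < fst b)" using between by blast
  then have "fst b \<le> fst v" using uv(3) by linarith
  moreover have "u \<noteq> a \<or> v \<noteq> b" using nab uv(1) by blast
  ultimately have "dist a b < dist u v"
    using flat_dist_less[OF fl _ _ ab(1,2) uv(2) ab(3)] \<open>{u, v} \<subseteq> X\<close> by blast
  moreover have "finite E" using Esub fin finite_all_edges finite_subset by blast
  moreover have "a \<noteq> b" using ab by auto
  then have "spanning_tree X (insert {a, b} (E - {{u, v}}))"
    using spanning_tree_exchange[OF st fin uv(1) ab(1,2) _ nab uv(4,5)] by blast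
  then have "weight E \<le> weight (insert {a, b} (E - {{u, v}}))"
    using mst unfolding is_MST_def by simp
  ultimately show False using weight_exchange[of E u v a b] uv(1) nab by simp
qed

lemma is_MST_MST: "generic P \<Longrightarrow> X \<subseteq> P \<Longrightarrow> is_MST X (MST X)"
  unfolding generic_def MST_def by (metis theI')

lemma cr2_le_cr: "finite P \<Longrightarrow> R \<subseteq> P \<Longrightarrow> cr2 R (P - R) \<le> cr P"
  unfolding cr_def by (rule Max_ge) auto

lemma obtain_last_below:
  fixes i :: nat
  assumes "j0 < i" "Q j0"
  obtains j where "j < i" "Q j" "\<And>m. j < m \<Longrightarrow> m < i \<Longrightarrow> \<not> Q m"
proof
  define J where "J = {j. j < i \<and> Q j}"
  have "finite J" "J \<noteq> {}" using assms by (auto simp: J_def)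
  then show "Max J < i" "Q (Max J)" "\<And>m. Max J < m \<Longrightarrow> m < i \<Longrightarrow> \<not> Q m"
    using Max_in[of J] Max_ge[of J] by (auto simp: J_def)
qed

lemma obtain_first_above:
  fixes a :: nat
  assumes "a < k0" "Q k0"
  obtains k where "a < k" "k \<le> k0" "Q k" "\<And>m. a < m \<Longrightarrow> m < k \<Longrightarrow> \<not> Q m"
proof
  define k where "k = (LEAST k. a < k \<and> Q k)"
  show "a < k" "Q k" using LeastI[of "\<lambda>k. a < k \<and> Q k" k0] assms by (auto simp: k_def)
  show "k \<le> k0" using Least_le[of "\<lambda>k. a < k \<and> Q k" k0] assms by (simp add: k_def)
  show "\<And>m. a < m \<Longrightarrow> m < k \<Longrightarrow> \<not> Q m" using not_less_Least by (auto simp: k_def)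
qed

definition leftmost_x :: "point set \<Rightarrow> real" where
  "leftmost_x e = Min (fst ` e)"

fun colouring :: "(nat \<Rightarrow> bool) \<Rightarrow> nat \<Rightarrow> nat \<Rightarrow> bool" where
  "colouring side n 0 = False"
| "colouring side n (Suc 0) = True"
| "colouring side n (Suc (Suc k)) =
     (if Suc (Suc k) = n - 1 \<or> side (Suc k) = side (Suc (Suc k))
      then \<not> colouring side n (Suc k) else colouring side n (Suc k))"

locale flat_convex_chain =
  fixes P :: "point set" and n :: nat and p :: "nat \<Rightarrow> point"
  assumes generic: "generic P" and flat: "flat P" and convex: "convex_position P"
    and four_le: "4 \<le> n" and P_eq: "P = p ` {..<n}"
    and fst_p_less: "\<And>i j. i < j \<Longrightarrow> j < n \<Longrightarrow> fst (p i) < fst (p j)"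
begin

definition above :: "nat \<Rightarrow> bool" where
  "above i \<longleftrightarrow> snd (p i) > line_y (p 0) (p (n - 1)) (fst (p i))"

definition colour :: "nat \<Rightarrow> bool" where
  "colour = colouring above n"

definition colour_class :: "bool \<Rightarrow> point set" where
  "colour_class c = p ` {i. i < n \<and> colour i = c}"

lemma finite_P: "finite P"
  using generic by (simp add: generic_def)

lemma p_in_P: "i < n \<Longrightarrow> p i \<in> P"
  by (simp add: P_eq)

lemma fst_p_le: "i \<le> j \<Longrightarrow> j < n \<Longrightarrow> fst (p i) \<le> fst (p j)"
  using fst_p_less by (cases "i = j") (auto intro: less_imp_le)

lemma fst_p_less_iff: "i < n \<Longrightarrow> j < n \<Longrightarrow> fst (p i) < fst (p j) \<longleftrightarrow> i < j"
  using fst_p_less by (metis less_asym linorder_neqE_nat)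

lemma inj_on_fst_p: "inj_on (\<lambda>i. fst (p i)) {..<n}"
  by (rule inj_onI) (metis fst_p_less lessThan_iff less_irrefl linorder_neqE_nat)

lemma inj_on_p: "inj_on p {..<n}"
  by (rule inj_on_imageI2[of fst]) (simp add: comp_def inj_on_fst_p)

lemma off_chord:
  assumes "a < b" "b < c" "c < n"
  shows "snd (p b) \<noteq> line_y (p a) (p c) (fst (p b))"
proof (rule off_line_if_not_collinear)
  show "\<not> collinear {p a, p b, p c}"
    using generic assms p_in_P fst_p_less unfolding generic_def
    by (metis less_trans order.strict_implies_not_eq)
qed (use assms fst_p_less in auto)

lemma side_of_chord:
  assumes "a < b" "b < c" "c < n"
  shows "snd (p b) > line_y (p a) (p c) (fst (p b)) \<longleftrightarrow> above b"
  unfolding above_def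
proof (rule convex_position_same_side[OF convex])
  show "p a \<in> P" "p b \<in> P" "p c \<in> P" "p 0 \<in> P" "p (n - 1) \<in> P"
    using assms by (auto intro: p_in_P)
  show "snd (p b) \<noteq> line_y (p a) (p c) (fst (p b))"
    using off_chord assms .
  show "snd (p b) \<noteq> line_y (p 0) (p (n - 1)) (fst (p b))"
    using off_chord[of 0 b "n - 1"] assms by simp
  show "fst (p 0) \<le> fst (p a)" "fst (p c) \<le> fst (p (n - 1))"
    using assms by (auto intro: fst_p_le)
qed (use assms fst_p_less in auto)

lemma crosses_if_above_differs:
  assumes "a < b" "b < c" "c < d" "d < n" "above b \<noteq> above c"
  shows "crosses {p a, p d} {p b, p c}"
proof (rule crosses_if_heights_swap[where L = "fst (p b)" and R = "fst (p c)"])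
  have "snd (p b) > line_y (p a) (p d) (fst (p b)) \<longleftrightarrow> above b"
    "snd (p c) > line_y (p a) (p d) (fst (p c)) \<longleftrightarrow> above c"
    "snd (p b) \<noteq> line_y (p a) (p d) (fst (p b))"
    "snd (p c) \<noteq> line_y (p a) (p d) (fst (p c))"
    using assms side_of_chord off_chord by auto
  moreover have "line_y (p b) (p c) (fst (p c)) = snd (p c)"
    using assms fst_p_less by (intro line_y_right) (metis less_irrefl less_trans)
  ultimately show "(line_y (p a) (p d) (fst (p b)) - line_y (p b) (p c) (fst (p b))) *
      (line_y (p a) (p d) (fst (p c)) - line_y (p b) (p c) (fst (p c))) \<le> 0"
    using assms(5) by (simp add: mult_le_0_iff) linarith
qed (use assms fst_p_less in \<open>auto intro: less_imp_le\<close>)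

lemma crosses_if_above_agrees:
  assumes "a < b" "b < c" "c < d" "d < n" "above b = above c"
  shows "crosses {p a, p c} {p b, p d}"
proof (rule crosses_if_heights_swap[where L = "fst (p b)" and R = "fst (p c)"])
  have "snd (p b) > line_y (p a) (p c) (fst (p b)) \<longleftrightarrow> above b"
    "snd (p c) > line_y (p b) (p d) (fst (p c)) \<longleftrightarrow> above c"
    "snd (p b) \<noteq> line_y (p a) (p c) (fst (p b))"
    "snd (p c) \<noteq> line_y (p b) (p d) (fst (p c))"
    using assms side_of_chord off_chord by auto
  moreover have "line_y (p a) (p c) (fst (p c)) = snd (p c)"
    using assms fst_p_less by (intro line_y_right) (metis less_irrefl less_trans)
  ultimately show "(line_y (p a) (p c) (fst (p b)) - line_y (p b) (p d) (fst (p b))) *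
      (line_y (p a) (p c) (fst (p c)) - line_y (p b) (p d) (fst (p c))) \<le> 0"
    using assms(5) by (simp add: mult_le_0_iff) linarith
qed (use assms fst_p_less in \<open>auto intro: less_imp_le\<close>)

lemma colour_0_ne_1: "colour 0 \<noteq> colour 1"
  by (simp add: colour_def)

lemma colour_Suc_eq_iff:
  "1 \<le> i \<Longrightarrow> i + 2 < n \<Longrightarrow> colour (Suc i) = colour i \<longleftrightarrow> above i \<noteq> above (Suc i)"
  by (cases i) (auto simp: colour_def)

lemma colour_last: "colour (n - 1) \<noteq> colour (n - 2)"
proof -
  have "n - 1 = Suc (Suc (n - 3))" "n - 2 = Suc (n - 3)" using four_le by auto
  then show ?thesis by (simp add: colour_def)
qed

lemma colour_class_subset: "colour_class c \<subseteq> P"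
  by (auto simp: colour_class_def P_eq)

lemma complement_colour_class: "P - colour_class True = colour_class False"
  using inj_on_p unfolding colour_class_def P_eq inj_on_def by blast

lemma MST_colour_class_consecutive:
  assumes "j < k" "k < n" "colour k = colour j" "\<And>m. j < m \<Longrightarrow> m < k \<Longrightarrow> colour m \<noteq> colour j"
  shows "{p j, p k} \<in> MST (colour_class (colour j))"
proof (rule is_MST_flat_consecutive)
  let ?X = "colour_class (colour j)"
  show "finite ?X" using finite_P colour_class_subset finite_subset by blast
  show "is_MST ?X (MST ?X)" using generic colour_class_subset by (rule is_MST_MST)
  show "flat ?X" using flat colour_class_subset by (rule flat_subset)
  show "p j \<in> ?X" "p k \<in> ?X" "fst (p j) < fst (p k)"
    using assms fst_p_less by (auto simp: colour_class_def)
  show "\<forall>x\<in>?X. \<not> (fst (p j) < fst x \<and> fst x < fst (p k))"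
  proof
    fix x assume "x \<in> ?X"
    then obtain m where "x = p m" "m < n" "colour m = colour j" by (auto simp: colour_class_def)
    then show "\<not> (fst (p j) < fst x \<and> fst x < fst (p k))"
      using assms fst_p_less_iff[of j m] fst_p_less_iff[of m k] by auto
  qed
qed

lemma finite_MST_colour_class: "finite (MST (colour_class c))"
proof -
  have "finite (colour_class c)" using finite_P colour_class_subset finite_subset by blast
  moreover have "is_MST (colour_class c) (MST (colour_class c))"
    using generic colour_class_subset by (rule is_MST_MST)
  then have "MST (colour_class c) \<subseteq> all_edges (colour_class c)"
    unfolding is_MST_def spanning_tree_def by blast
  ultimately show ?thesis using finite_all_edges finite_subset by blast
qed

lemma leftmost_x_doubleton: "j < k \<Longrightarrow> k < n \<Longrightarrow> leftmost_x {p j, p k} = fst (p j)"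
  using fst_p_less by (simp add: leftmost_x_def min_def less_imp_le)

lemma obtain_last_other_colour:
  assumes "1 \<le> i"
  obtains j where "j < i" "colour j \<noteq> colour i" "\<And>m. j < m \<Longrightarrow> m < i \<Longrightarrow> colour m = colour i"
proof -
  obtain j0 where j0: "j0 < i" "colour j0 \<noteq> colour i"
  proof (cases "colour 0 = colour i")
    case True
    then have "colour 1 \<noteq> colour i" using colour_0_ne_1 by simp
    moreover from this have "1 < i" using assms by (cases "i = 1") auto
    ultimately show thesis using that by blast
  next
    case False
    then show thesis using assms by (intro that[of 0]) auto
  qed
  obtain j where j: "j < i" "colour j \<noteq> colour i"
    and between: "\<And>m. j < m \<Longrightarrow> m < i \<Longrightarrow> \<not> colour m \<noteq> colour i"
    by (rule obtain_last_below[of j0 i "\<lambda>m. colour m \<noteq> colour i", OF j0]) blast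
  show ?thesis
  proof (rule that[OF j])
    show "colour m = colour i" if "j < m" "m < i" for m using between[OF that] by simp
  qed
qed

lemma obtain_first_other_colour:
  assumes "h + 1 < n"
  obtains k where "h < k" "k < n" "colour k \<noteq> colour h" "\<And>m. h < m \<Longrightarrow> m < k \<Longrightarrow> colour m = colour h"
proof -
  obtain k0 where k0: "h < k0" "k0 < n" "colour k0 \<noteq> colour h"
  proof (cases "colour (n - 1) = colour h")
    case True
    then have "colour (n - 2) \<noteq> colour h" using colour_last by simp
    moreover from this have "h < n - 2" using assms by (cases "h = n - 2") auto
    ultimately show thesis using assms by (intro that[of "n - 2"]) auto
  next
    case False
    then show thesis using assms by (intro that[of "n - 1"]) auto
  qed
  obtain k where k: "h < k" "k \<le> k0" "colour k \<noteq> colour h"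
    and between: "\<And>m. h < m \<Longrightarrow> m < k \<Longrightarrow> \<not> colour m \<noteq> colour h"
    by (rule obtain_first_above[of h k0 "\<lambda>m. colour m \<noteq> colour h", OF k0(1,3)]) blast
  show ?thesis
  proof (rule that)
    show "h < k" "k < n" "colour k \<noteq> colour h" using k k0 by auto
    show "colour m = colour h" if "h < m" "m < k" for m using between[OF that] by simp
  qed
qed

lemma MST_edges_if_colour_kept:
  assumes j: "j < i" "colour j \<noteq> colour i" "\<And>m. j < m \<Longrightarrow> m < i \<Longrightarrow> colour m = colour i"
    and k: "i + 1 < k" "k < n" "colour k \<noteq> colour (i + 1)"
      "\<And>m. i + 1 < m \<Longrightarrow> m < k \<Longrightarrow> colour m = colour (i + 1)"
    and kept: "colour (i + 1) = colour i"
  shows "{p i, p (i + 1)} \<in> MST (colour_class (colour i))" "{p j, p k} \<in> MST (colour_class (colour j))"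
proof -
  show "{p i, p (i + 1)} \<in> MST (colour_class (colour i))"
    using kept k(1,2) by (intro MST_colour_class_consecutive) auto
  have "colour m \<noteq> colour j" if "j < m" "m < k" for m
  proof -
    consider "m < i" | "m = i" | "m = i + 1" | "i + 1 < m" by linarith
    then show ?thesis using that j(2) j(3)[of m] k(4)[of m] kept by cases auto
  qed
  then show "{p j, p k} \<in> MST (colour_class (colour j))"
    using j(1,2) k(1-3) kept by (intro MST_colour_class_consecutive) auto
qed

lemma MST_edges_if_colour_switches:
  assumes j: "j < i" "colour j \<noteq> colour i" "\<And>m. j < m \<Longrightarrow> m < i \<Longrightarrow> colour m = colour i"
    and k: "i + 1 < k" "k < n" "colour k \<noteq> colour (i + 1)"
      "\<And>m. i + 1 < m \<Longrightarrow> m < k \<Longrightarrow> colour m = colour (i + 1)"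
    and switch: "colour (i + 1) = (\<not> colour i)"
  shows "{p i, p k} \<in> MST (colour_class (colour i))" "{p j, p (i + 1)} \<in> MST (colour_class (colour j))"
proof -
  have "colour m \<noteq> colour i" if "i < m" "m < k" for m
    using that k(4)[of m] switch by (cases "m = i + 1") auto
  then show "{p i, p k} \<in> MST (colour_class (colour i))"
    using k(1-3) switch by (intro MST_colour_class_consecutive) auto
  have "colour m \<noteq> colour j" if "j < m" "m < i + 1" for m
    using that j(2) j(3)[of m] switch by (cases "m = i") auto
  then show "{p j, p (i + 1)} \<in> MST (colour_class (colour j))"
    using j(1,2) k(1,2) switch by (intro MST_colour_class_consecutive) auto
qed

lemma crossing_at:
  assumes "1 \<le> i" "i + 3 \<le> n"
  obtains e f where "e \<in> MST (colour_class (colour i))" "f \<in> MST (colour_class (\<not> colour i))"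
    "crosses e f" "max (leftmost_x e) (leftmost_x f) = fst (p i)"
proof -
  obtain j where j: "j < i" "colour j \<noteq> colour i" "\<And>m. j < m \<Longrightarrow> m < i \<Longrightarrow> colour m = colour i"
    using obtain_last_other_colour assms(1) by blast
  obtain k where k: "i + 1 < k" "k < n" "colour k \<noteq> colour (i + 1)"
      "\<And>m. i + 1 < m \<Longrightarrow> m < k \<Longrightarrow> colour m = colour (i + 1)"
    using obtain_first_other_colour[of "i + 1"] assms(2) by auto
  have "fst (p j) < fst (p i)" using j(1) assms by (intro fst_p_less) auto
  then have key: "max (fst (p i)) (fst (p j)) = fst (p i)" by simp
  show ?thesis
  proof (cases "above i = above (i + 1)")
    case False
    then have "colour (i + 1) = colour i" using colour_Suc_eq_iff[of i] assms by auto
    then have "{p i, p (i + 1)} \<in> MST (colour_class (colour i))"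
      "{p j, p k} \<in> MST (colour_class (colour j))"
      using MST_edges_if_colour_kept[OF j k] by blast+
    moreover have "crosses {p i, p (i + 1)} {p j, p k}"
      using crosses_if_above_differs[of j i "i + 1" k] j(1) k(1,2) False
      by (simp add: crosses_commute)
    moreover have "leftmost_x {p i, p (i + 1)} = fst (p i)" "leftmost_x {p j, p k} = fst (p j)"
      using j(1) k(1,2) leftmost_x_doubleton by simp_all
    ultimately show ?thesis using that j(2) key by (simp add: max.commute)
  next
    case True
    then have "colour (i + 1) = (\<not> colour i)" using colour_Suc_eq_iff[of i] assms by auto
    then have "{p i, p k} \<in> MST (colour_class (colour i))"
      "{p j, p (i + 1)} \<in> MST (colour_class (colour j))"
      using MST_edges_if_colour_switches[OF j k] by blast+
    moreover have "crosses {p i, p k} {p j, p (i + 1)}"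
      using crosses_if_above_agrees[of j i "i + 1" k] j(1) k(1,2) True
      by (simp add: crosses_commute)
    moreover have "leftmost_x {p i, p k} = fst (p i)" "leftmost_x {p j, p (i + 1)} = fst (p j)"
      using j(1) k(1,2) leftmost_x_doubleton by simp_all
    ultimately show ?thesis using that j(2) key by (simp add: max.commute)
  qed
qed

lemma crossing_between_colour_classes:
  assumes "1 \<le> i" "i + 3 \<le> n"
  obtains e f where "e \<in> MST (colour_class True)" "f \<in> MST (colour_class False)"
    "crosses e f" "max (leftmost_x e) (leftmost_x f) = fst (p i)"
proof -
  obtain e f where ef: "e \<in> MST (colour_class (colour i))" "f \<in> MST (colour_class (\<not> colour i))"
    "crosses e f" "max (leftmost_x e) (leftmost_x f) = fst (p i)"
    by (rule crossing_at[OF assms])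
  show ?thesis
  proof (cases "colour i")
    case True
    then show ?thesis using that[of e f] ef by simp
  next
    case False
    have "crosses f e" using ef(3) crosses_commute by blast
    moreover have "max (leftmost_x f) (leftmost_x e) = fst (p i)" using ef(4) by (simp add: max.commute)
    ultimately show ?thesis using that[of f e] ef(1,2) False by simp
  qed
qed

lemma n_minus_3_le_cr: "n - 3 \<le> cr P"
proof -
  define S where
    "S = {(e, f). e \<in> MST (colour_class True) \<and> f \<in> MST (colour_class False) \<and> crosses e f}"
  define key :: "point set \<times> point set \<Rightarrow> real" where
    "key = (\<lambda>(e, f). max (leftmost_x e) (leftmost_x f))"
  have "S \<subseteq> MST (colour_class True) \<times> MST (colour_class False)"
    unfolding S_def by blast
  then have "finite S" using finite_MST_colour_class by (meson finite_SigmaI finite_subset)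
  have "(\<lambda>i. fst (p i)) ` {1..n - 3} \<subseteq> key ` S"
  proof
    fix x assume "x \<in> (\<lambda>i. fst (p i)) ` {1..n - 3}"
    then obtain i where "1 \<le> i" "i + 3 \<le> n" "x = fst (p i)" using four_le by auto
    then obtain e f where "e \<in> MST (colour_class True)" "f \<in> MST (colour_class False)"
      "crosses e f" "max (leftmost_x e) (leftmost_x f) = x"
      using crossing_between_colour_classes by metis
    then have "(e, f) \<in> S" "key (e, f) = x" by (simp_all add: S_def key_def)
    then show "x \<in> key ` S" by (metis image_eqI)
  qed
  have "inj_on (\<lambda>i. fst (p i)) {1..n - 3}" using inj_on_fst_p by (rule inj_on_subset) auto
  then have "n - 3 = card ((\<lambda>i. fst (p i)) ` {1..n - 3})" by (simp add: card_image)
  also have "\<dots> \<le> card (key ` S)"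
    using \<open>finite S\<close> \<open>_ \<subseteq> key ` S\<close> by (intro card_mono) auto
  also have "\<dots> \<le> card S" using \<open>finite S\<close> by (rule card_image_le)
  also have "\<dots> = cr2 (colour_class True) (P - colour_class True)"
    by (simp add: S_def cr2_def complement_colour_class)
  also have "\<dots> \<le> cr P" using finite_P colour_class_subset by (rule cr2_le_cr)
  finally show ?thesis .
qed

end

lemma obtain_enumeration_by_fst:
  fixes P :: "point set"
  assumes "finite P" "inj_on fst P"
  obtains p where "P = p ` {..<card P}"
    "\<And>i j. i < j \<Longrightarrow> j < card P \<Longrightarrow> fst (p i) < fst (p j)"
proof
  define xs where "xs = sorted_list_of_set (fst ` P)"
  have xs: "length xs = card P" "set xs = fst ` P" "sorted_wrt (<) xs"
    using assms by (simp_all add: xs_def card_image)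
  define p where "p i = inv_into P fst (xs ! i)" for i
  have p: "fst (p i) = xs ! i" "p i \<in> P" if "i < card P" for i
    using that xs nth_mem[of i xs] by (auto simp: p_def f_inv_into_f inv_into_into)
  then show "\<And>i j. i < j \<Longrightarrow> j < card P \<Longrightarrow> fst (p i) < fst (p j)"
    using xs by (metis order.strict_trans sorted_wrt_nth_less)
  show "P = p ` {..<card P}"
  proof
    show "P \<subseteq> p ` {..<card P}"
    proof
      fix q assume "q \<in> P"
      then obtain i where "i < card P" "xs ! i = fst q" using xs by (metis imageI in_set_conv_nth)
      then have "p i = q" using \<open>q \<in> P\<close> assms(2) by (simp add: p_def)
      then show "q \<in> p ` {..<card P}" using \<open>i < card P\<close> by blast
    qed
  qed (use p in auto)
qed

theorem lemma5:
  fixes P :: "(real \<times> real) set" and n :: nat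
  assumes "generic P" and "flat P" and "convex_position P" and "card P = n"
  shows "int (cr P) \<ge> int n - 3"
proof (cases "n < 4")
  case False
  have "finite P" using assms(1) by (simp add: generic_def)
  then obtain p where "P = p ` {..<card P}"
    "\<And>i j. i < j \<Longrightarrow> j < card P \<Longrightarrow> fst (p i) < fst (p j)"
    using obtain_enumeration_by_fst flat_inj_on_fst[OF assms(2)] by blast
  then interpret flat_convex_chain P n p
    using assms False by unfold_locales simp_all
  show ?thesis using n_minus_3_le_cr by linarith
qed simp

end
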